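(* Let $q$ be a prime power, let $V$ be a $v$-dimensional vector space over $\mathrm{GF}(q)$, and let $\mathcal{G}$ be a $(g-1)$-spread of $V$, i.e. a set of $g$-dimensional subspaces of $V$ such that every $1$-dimensional subspace of $V$ is contained in exactly one element of $\mathcal{G}$. Let $L$ be a $2$-dimensional subspace of $V$ that is not contained in any element of $\mathcal{G}$. Then the number of $3$-dimensional subspaces of $V$ which contain $L$ and which are scattered with respect to $\mathcal{G}$ equals \[ \lambda_{\max}=\begin{bmatrix} v-2\\ 1\end{bmatrix}_q-\begin{bmatrix} 2\\ 1\end{bmatrix}_q\begin{bmatrix} g-1\\ 1\end{bmatrix}_q . \] In particular, this number does not depend on $L$.
   Context: For integers $0\le m\le n$, the Gaussian coefficient is $\begin{bmatrix} n\\ m\end{bmatrix}_q=\prod_{i=0}^{m-1}\frac{q^{n-i}-1}{q^{m-i}-1}$, the number of $m$-dimensional subspaces of an $n$-dimensional $\mathrm{GF}(q)$-vector space. A subspace $B\le V$ is called scattered with respect to the spread $\mathcal{G}$ if $B$ contains no $2$-dimensional subspace that is contained in some element of $\mathcal{G}$ (equivalently, $\dim(B\cap S)\le 1$ for every $S\in\mathcal{G}$). *)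

theory Defs
  imports "HOL-Analysis.Analysis"
begin

definition gauss_binom :: "nat \<Rightarrow> nat \<Rightarrow> nat \<Rightarrow> real" where
  "gauss_binom q n m = (\<Prod>i<m. (real q ^ (n - i) - 1) / (real q ^ (m - i) - 1))"

definition is_spread :: "nat \<Rightarrow> ('a::field ^ 'n) set set \<Rightarrow> bool" where
  "is_spread g G \<longleftrightarrow>
     (\<forall>S\<in>G. vec.subspace S \<and> vec.dim S = g) \<and>
     (\<forall>P. vec.subspace P \<and> vec.dim P = 1 \<longrightarrow> (\<exists>!S. S \<in> G \<and> P \<subseteq> S))"

definition scattered :: "('a::field ^ 'n) set set \<Rightarrow> ('a ^ 'n) set \<Rightarrow> bool" where
  "scattered G B \<longleftrightarrow>
     \<not> (\<exists>W. vec.subspace W \<and> vec.dim W = 2 \<and> W \<subseteq> B \<and> (\<exists>S\<in>G. W \<subseteq> S))"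

end

theory Submission
  imports Defs
begin

text \<open>A 3-space B through L meets every spread element S in dimension at most
  dim (L \<inter> S) + 1 \<le> 2, so B fails to be scattered exactly when dim (B \<inter> S) = 2 for a
  spread element S meeting L in a point; then B = L + (B \<inter> S), and B \<inter> S is a line of S
  through the point L \<inter> S. Distinct spread elements meet trivially, so each such B comes
  from exactly one S, and the q + 1 points of L lie in q + 1 distinct spread elements.
  Removing these (q + 1) [g-1, 1]_q subspaces from the [v-2, 1]_q 3-spaces through L
  leaves the claimed number.\<close>

lemma card_subspace:
  fixes U :: "('a::{field,finite}^'n) set"
  assumes U: "vec.subspace U"
  shows "card U = CARD('a) ^ vec.dim U"
proof -
  obtain B where B: "B \<subseteq> U" "vec.independent B" "U \<subseteq> vec.span B" "card B = vec.dim U"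
    using vec.basis_exists by blast
  have span_B: "vec.span B = U"
    using B U by (metis vec.span_subspace)
  define coords where "coords = PiE B (\<lambda>_. UNIV :: 'a set)"
  define comb where "comb c = (\<Sum>v\<in>B. c v *s v)" for c :: "'a^'n \<Rightarrow> 'a"
  have "inj_on comb coords"
  proof (rule inj_onI)
    fix c c' assume c: "c \<in> coords" and c': "c' \<in> coords" and eq: "comb c = comb c'"
    have "(\<Sum>v\<in>B. (c v - c' v) *s v) = 0"
      using eq by (simp add: comb_def vec.scale_left_diff_distrib sum_subtractf)
    then have "\<forall>v\<in>B. c v - c' v = 0"
      using B(2)[unfolded vec.independent_explicit, THEN conjunct2, rule_format,
          of "\<lambda>v. c v - c' v"] by simp
    then show "c = c'"
      using c c' unfolding coords_def by (intro PiE_ext) auto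
  qed
  moreover have "comb ` coords = U"
  proof
    have "comb c \<in> vec.span B" for c
      unfolding comb_def by (intro vec.span_sum vec.span_scale vec.span_base)
    then show "comb ` coords \<subseteq> U"
      using span_B by auto
    show "U \<subseteq> comb ` coords"
    proof
      fix x assume "x \<in> U"
      then obtain u where x: "x = (\<Sum>v\<in>B. u v *s v)"
        using vec.span_finite[of B] span_B by auto
      have "comb (restrict u B) = x"
        unfolding comb_def x by (rule sum.cong) auto
      moreover have "restrict u B \<in> coords"
        unfolding coords_def by simp
      ultimately show "x \<in> comb ` coords" by blast
    qed
  qed
  ultimately have "card U = card coords"
    using card_image by fastforce
  then show ?thesis
    using B(4) by (simp add: coords_def card_PiE)
qed

lemma card_field_ge_2: "2 \<le> CARD('a::{field,finite})"
proof -
  have "card {0::'a, 1} \<le> CARD('a)"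
    by (rule card_mono) auto
  then show ?thesis
    by simp
qed

lemma gauss_binom_1: "gauss_binom q n 1 = (real q ^ n - 1) / (real q - 1)"
  by (simp add: gauss_binom_def)

text \<open>Every vector of U outside A spans, together with A, exactly one of the counted
  subspaces B, and each B contains q^(a+1) - q^a such vectors.\<close>
lemma card_subspaces_Suc_dim_between_mult:
  fixes A U :: "('a::{field,finite}^'n) set"
  assumes A: "vec.subspace A" and U: "vec.subspace U" and AU: "A \<subseteq> U"
  shows "card {B. vec.subspace B \<and> A \<subseteq> B \<and> B \<subseteq> U \<and> vec.dim B = Suc (vec.dim A)}
           * (CARD('a) ^ Suc (vec.dim A) - CARD('a) ^ vec.dim A)
         = CARD('a) ^ vec.dim U - CARD('a) ^ vec.dim A"
proof -
  define F where "F = {B. vec.subspace B \<and> A \<subseteq> B \<and> B \<subseteq> U \<and> vec.dim B = Suc (vec.dim A)}"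
  have dim_insert: "vec.dim (vec.span (insert x A)) = Suc (vec.dim A)" if "x \<notin> A" for x
  proof -
    have "x \<notin> vec.span A"
      using that A by (metis vec.span_eq_iff)
    then show ?thesis
      by (simp add: vec.dim_insert)
  qed
  have span_insert: "B = vec.span (insert x A)" if B: "B \<in> F" and x: "x \<in> B - A" for B x
  proof -
    have "vec.span (insert x A) \<subseteq> B"
      using B x unfolding F_def by (intro vec.span_minimal) auto
    then show ?thesis
      using B x dim_insert unfolding F_def
      by (metis (mono_tags, lifting) DiffD2 mem_Collect_eq order_refl vec.subspace_dim_equal
          vec.subspace_span)
  qed
  have U_minus_A: "U - A = (\<Union>B\<in>F. B - A)"
  proof
    show "U - A \<subseteq> (\<Union>B\<in>F. B - A)"
    proof
      fix x assume x: "x \<in> U - A"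
      have "vec.span (insert x A) \<subseteq> U"
        using x AU U by (intro vec.span_minimal) auto
      then have "vec.span (insert x A) \<in> F"
        using x dim_insert unfolding F_def by (auto intro: vec.span_base)
      moreover have "x \<in> vec.span (insert x A) - A"
        using x by (auto intro: vec.span_base)
      ultimately show "x \<in> (\<Union>B\<in>F. B - A)" by blast
    qed
  qed (auto simp: F_def)
  have "card (U - A) = (\<Sum>B\<in>F. card (B - A))"
    unfolding U_minus_A
  proof (rule card_UN_disjoint)
    show "\<forall>B\<in>F. \<forall>B'\<in>F. B \<noteq> B' \<longrightarrow> (B - A) \<inter> (B' - A) = {}"
      using span_insert by blast
  qed auto
  also have "\<dots> = (\<Sum>B\<in>F. CARD('a) ^ Suc (vec.dim A) - CARD('a) ^ vec.dim A)"
  proof (rule sum.cong)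
    fix B assume "B \<in> F"
    then show "card (B - A) = CARD('a) ^ Suc (vec.dim A) - CARD('a) ^ vec.dim A"
      using A unfolding F_def by (simp add: card_Diff_subset card_subspace)
  qed simp
  also have "\<dots> = card F * (CARD('a) ^ Suc (vec.dim A) - CARD('a) ^ vec.dim A)"
    by simp
  finally have "card F * (CARD('a) ^ Suc (vec.dim A) - CARD('a) ^ vec.dim A) = card (U - A)"
    by simp
  also have "\<dots> = card U - card A"
    using AU by (simp add: card_Diff_subset)
  also have "\<dots> = CARD('a) ^ vec.dim U - CARD('a) ^ vec.dim A"
    using A U by (simp add: card_subspace)
  finally show ?thesis
    unfolding F_def .
qed

lemma card_subspaces_Suc_dim_between:
  fixes A U :: "('a::{field,finite}^'n) set"
  assumes A: "vec.subspace A" and U: "vec.subspace U" and AU: "A \<subseteq> U"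
  shows "real (card {B. vec.subspace B \<and> A \<subseteq> B \<and> B \<subseteq> U \<and> vec.dim B = Suc (vec.dim A)})
         = gauss_binom CARD('a) (vec.dim U - vec.dim A) 1"
proof -
  define n where "n = card {B. vec.subspace B \<and> A \<subseteq> B \<and> B \<subseteq> U \<and> vec.dim B = Suc (vec.dim A)}"
  define a where "a = vec.dim A"
  define d where "d = vec.dim U - vec.dim A"
  define Q where "Q = real CARD('a)"
  have Q: "2 \<le> Q"
    unfolding Q_def using card_field_ge_2[where 'a='a] by simp
  have dim_U: "vec.dim U = a + d"
    using vec.dim_subset[OF AU] by (simp add: a_def d_def)
  have "CARD('a) ^ a \<le> CARD('a) ^ Suc a" "CARD('a) ^ a \<le> CARD('a) ^ (a + d)"
    using card_field_ge_2[where 'a='a] by (simp_all add: power_increasing)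
  then have "real n * (Q ^ Suc a - Q ^ a) = Q ^ (a + d) - Q ^ a"
    using arg_cong[OF card_subspaces_Suc_dim_between_mult[OF A U AU], of real]
    by (simp add: n_def a_def dim_U Q_def)
  then have "(real n * (Q - 1)) * Q ^ a = (Q ^ d - 1) * Q ^ a"
    by (simp add: power_add algebra_simps)
  then have "real n * (Q - 1) = Q ^ d - 1"
    using Q by simp
  then show ?thesis
    using Q unfolding gauss_binom_1 n_def d_def Q_def by (simp add: eq_divide_eq)
qed

lemma card_points:
  fixes L :: "('a::{field,finite}^'n) set"
  assumes "vec.subspace L"
  shows "real (card {P. vec.subspace P \<and> vec.dim P = 1 \<and> P \<subseteq> L})
         = gauss_binom CARD('a) (vec.dim L) 1"
proof -
  have "{P. vec.subspace P \<and> vec.dim P = 1 \<and> P \<subseteq> L}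
        = {P. vec.subspace P \<and> {0} \<subseteq> P \<and> P \<subseteq> L \<and> vec.dim P = Suc (vec.dim {0::'a^'n})}"
    by (auto intro: vec.subspace_0)
  then show ?thesis
    using card_subspaces_Suc_dim_between[OF vec.subspace_single_0 assms] assms
    by (simp add: vec.subspace_0)
qed

lemma dim_span_Un_Int:
  fixes X Y :: "('a::field^'n) set"
  assumes X: "vec.subspace X" and Y: "vec.subspace Y"
  shows "vec.dim (vec.span (X \<union> Y)) + vec.dim (X \<inter> Y) = vec.dim X + vec.dim Y"
proof -
  have spans: "vec.span X = X" "vec.span Y = Y"
    using X Y by simp_all
  show ?thesis
    unfolding vec.span_Un spans by (rule vec.dim_sums_Int[OF X Y])
qed

lemma dim_Int_less_if_not_subset:
  fixes L S :: "('a::field^'n) set"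
  assumes "vec.subspace L" "vec.subspace S" "\<not> L \<subseteq> S"
  shows "vec.dim (L \<inter> S) < vec.dim L"
proof (rule ccontr)
  assume "\<not> vec.dim (L \<inter> S) < vec.dim L"
  then have "L \<inter> S = L"
    using assms by (intro vec.subspace_dim_equal) (auto intro: vec.subspace_inter)
  then show False
    using assms(3) by blast
qed

lemma dim_Int_le_Suc_dim_Int:
  fixes L B S :: "('a::field^'n) set"
  assumes L: "vec.subspace L" and B: "vec.subspace B" and S: "vec.subspace S"
    and LB: "L \<subseteq> B" and dim_B: "vec.dim B = Suc (vec.dim L)"
  shows "vec.dim (B \<inter> S) \<le> Suc (vec.dim (L \<inter> S))"
proof -
  have "vec.span (L \<union> (B \<inter> S)) \<subseteq> B"
    using B LB by (intro vec.span_minimal) auto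
  then have "vec.dim (vec.span (L \<union> (B \<inter> S))) \<le> vec.dim B"
    by (rule vec.dim_subset)
  moreover have Int_eq: "L \<inter> (B \<inter> S) = L \<inter> S"
    using LB by blast
  have "vec.dim (vec.span (L \<union> (B \<inter> S))) + vec.dim (L \<inter> S)
             = vec.dim L + vec.dim (B \<inter> S)"
    using dim_span_Un_Int[OF L vec.subspace_inter[OF B S]] Int_eq by simp
  ultimately show ?thesis
    using dim_B by linarith
qed

lemma bij_betw_Int_subspaces_Suc_dim:
  fixes L S :: "('a::field^'n) set"
  assumes L: "vec.subspace L" and S: "vec.subspace S"
  shows "bij_betw (\<lambda>B. B \<inter> S)
           {B. vec.subspace B \<and> L \<subseteq> B \<and> vec.dim B = Suc (vec.dim L)
               \<and> vec.dim (B \<inter> S) = Suc (vec.dim (L \<inter> S))}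
           {W. vec.subspace W \<and> L \<inter> S \<subseteq> W \<and> W \<subseteq> S \<and> vec.dim W = Suc (vec.dim (L \<inter> S))}"
    (is "bij_betw _ ?E ?W")
proof (rule bij_betw_byWitness[where f' = "\<lambda>W. vec.span (L \<union> W)"])
  show "\<forall>B\<in>?E. vec.span (L \<union> (B \<inter> S)) = B"
  proof
    fix B assume B: "B \<in> ?E"
    have span_sub: "vec.span (L \<union> (B \<inter> S)) \<subseteq> B"
      using B by (intro vec.span_minimal) auto
    have "L \<inter> (B \<inter> S) = L \<inter> S"
      using B by blast
    then have "vec.dim (vec.span (L \<union> (B \<inter> S))) = vec.dim B"
      using dim_span_Un_Int[OF L vec.subspace_inter[of B S]] B S by simp
    then show "vec.span (L \<union> (B \<inter> S)) = B"
      using span_sub B by (intro vec.subspace_dim_equal) auto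
  qed
  have span_W: "vec.dim (vec.span (L \<union> W)) = Suc (vec.dim L) \<and> vec.span (L \<union> W) \<inter> S = W"
    if W: "W \<in> ?W" for W
  proof -
    have "L \<inter> W = L \<inter> S"
      using W by blast
    then have dim_span: "vec.dim (vec.span (L \<union> W)) = Suc (vec.dim L)"
      using dim_span_Un_Int[OF L, of W] W by simp
    have "W \<subseteq> vec.span (L \<union> W) \<inter> S"
      using W vec.span_superset[of "L \<union> W"] by blast
    moreover have "vec.dim (vec.span (L \<union> W) \<inter> S) \<le> vec.dim W"
      using dim_Int_le_Suc_dim_Int[OF L vec.subspace_span S _ dim_span] W
        vec.span_superset[of "L \<union> W"] by auto
    ultimately have "W = vec.span (L \<union> W) \<inter> S"
      using W S by (intro vec.subspace_dim_equal) (auto intro: vec.subspace_inter)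
    then show ?thesis
      using dim_span by simp
  qed
  then show "\<forall>W\<in>?W. vec.span (L \<union> W) \<inter> S = W"
    by blast
  show "(\<lambda>B. B \<inter> S) ` ?E \<subseteq> ?W"
    using S by (auto intro: vec.subspace_inter)
  show "(\<lambda>W. vec.span (L \<union> W)) ` ?W \<subseteq> ?E"
    using span_W vec.span_superset by fastforce
qed

lemma spread_Int_subset_zero:
  fixes G :: "('a::field ^ 'n) set set"
  assumes spread: "is_spread g G" and S: "S \<in> G" and S': "S' \<in> G" and "S \<noteq> S'"
  shows "S \<inter> S' \<subseteq> {0}"
proof
  fix x assume x: "x \<in> S \<inter> S'"
  show "x \<in> {0}"
  proof (rule ccontr)
    assume "x \<notin> {0}"
    then have "vec.subspace (vec.span {x})" "vec.dim (vec.span {x}) = 1"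
      by auto
    then have unique: "\<exists>!T. T \<in> G \<and> vec.span {x} \<subseteq> T"
      using spread unfolding is_spread_def by blast
    have "vec.subspace S" "vec.subspace S'"
      using S S' spread unfolding is_spread_def by blast+
    then have "vec.span {x} \<subseteq> S" "vec.span {x} \<subseteq> S'"
      using x by (simp_all add: vec.span_minimal)
    then show False
      using unique S S' \<open>S \<noteq> S'\<close> by blast
  qed
qed

lemma dim_Int_spread_elements_le:
  fixes G :: "('a::field ^ 'n) set set"
  assumes spread: "is_spread g G" and S: "S \<in> G" and S': "S' \<in> G" and "S \<noteq> S'"
    and B: "vec.subspace B"
  shows "vec.dim (B \<inter> S) + vec.dim (B \<inter> S') \<le> vec.dim B"
proof -
  have "vec.subspace S" "vec.subspace S'"
    using spread S S' unfolding is_spread_def by blast+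
  then have "vec.subspace (B \<inter> S)" "vec.subspace (B \<inter> S')"
    using B by (auto intro: vec.subspace_inter)
  moreover have "vec.dim ((B \<inter> S) \<inter> (B \<inter> S')) = 0"
    using spread_Int_subset_zero[OF spread S S' \<open>S \<noteq> S'\<close>] by auto
  moreover have "vec.dim (vec.span ((B \<inter> S) \<union> (B \<inter> S'))) \<le> vec.dim B"
    using B by (intro vec.dim_subset vec.span_minimal) auto
  ultimately show ?thesis
    using dim_span_Un_Int[of "B \<inter> S" "B \<inter> S'"] by linarith
qed

lemma bij_betw_spread_elements_points:
  fixes G :: "('a::field ^ 'n) set set"
  assumes spread: "is_spread g G" and L: "vec.subspace L"
    and L_meets: "\<forall>S\<in>G. vec.dim (L \<inter> S) \<le> 1"
  shows "bij_betw (\<lambda>S. L \<inter> S) {S\<in>G. vec.dim (L \<inter> S) = 1}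
           {P. vec.subspace P \<and> vec.dim P = 1 \<and> P \<subseteq> L}"
proof (rule bij_betw_imageI)
  show "inj_on (\<lambda>S. L \<inter> S) {S\<in>G. vec.dim (L \<inter> S) = 1}"
  proof (rule inj_onI)
    fix S S' assume S: "S \<in> {S\<in>G. vec.dim (L \<inter> S) = 1}" and S': "S' \<in> {S\<in>G. vec.dim (L \<inter> S) = 1}"
      and eq: "L \<inter> S = L \<inter> S'"
    have "\<not> L \<inter> S \<subseteq> {0}"
      using S vec.dim_eq_0[of "L \<inter> S"] by auto
    then have "\<not> S \<inter> S' \<subseteq> {0}"
      using eq by blast
    then show "S = S'"
      using spread_Int_subset_zero[OF spread] S S' by blast
  qed
  show "(\<lambda>S. L \<inter> S) ` {S\<in>G. vec.dim (L \<inter> S) = 1} = {P. vec.subspace P \<and> vec.dim P = 1 \<and> P \<subseteq> L}"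
  proof
    show "(\<lambda>S. L \<inter> S) ` {S\<in>G. vec.dim (L \<inter> S) = 1} \<subseteq> {P. vec.subspace P \<and> vec.dim P = 1 \<and> P \<subseteq> L}"
      using L spread unfolding is_spread_def by (auto intro: vec.subspace_inter)
    show "{P. vec.subspace P \<and> vec.dim P = 1 \<and> P \<subseteq> L} \<subseteq> (\<lambda>S. L \<inter> S) ` {S\<in>G. vec.dim (L \<inter> S) = 1}"
    proof
      fix P assume P: "P \<in> {P. vec.subspace P \<and> vec.dim P = 1 \<and> P \<subseteq> L}"
      then obtain S where S: "S \<in> G" "P \<subseteq> S" "vec.subspace S"
        using spread unfolding is_spread_def by blast
      have "vec.dim P \<le> vec.dim (L \<inter> S)"
        using P S by (intro vec.dim_subset) auto
      then have dim_LS: "vec.dim (L \<inter> S) = 1"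
        using P L_meets S(1) by force
      then have "P = L \<inter> S"
        using P S L by (intro vec.subspace_dim_equal) (auto intro: vec.subspace_inter)
      then show "P \<in> (\<lambda>S. L \<inter> S) ` {S\<in>G. vec.dim (L \<inter> S) = 1}"
        using S dim_LS by blast
    qed
  qed
qed

lemma not_scattered_Suc_dim_eq_UN:
  fixes G :: "('a::field ^ 'n) set set"
  assumes G: "\<forall>S\<in>G. vec.subspace S" and L: "vec.subspace L"
    and L_meets: "\<forall>S\<in>G. vec.dim (L \<inter> S) \<le> 1"
  shows "{B. vec.subspace B \<and> L \<subseteq> B \<and> vec.dim B = Suc (vec.dim L) \<and> \<not> scattered G B}
       = (\<Union>S\<in>{S\<in>G. vec.dim (L \<inter> S) = 1}.
            {B. vec.subspace B \<and> L \<subseteq> B \<and> vec.dim B = Suc (vec.dim L)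
                \<and> vec.dim (B \<inter> S) = Suc (vec.dim (L \<inter> S))})"
proof (intro equalityI subsetI)
  fix B assume "B \<in> {B. vec.subspace B \<and> L \<subseteq> B \<and> vec.dim B = Suc (vec.dim L) \<and> \<not> scattered G B}"
  then have B: "vec.subspace B" "L \<subseteq> B" "vec.dim B = Suc (vec.dim L)" and "\<not> scattered G B"
    by auto
  then obtain W S where W: "vec.subspace W" "vec.dim W = 2" "W \<subseteq> B" "W \<subseteq> S" and S: "S \<in> G"
    unfolding scattered_def by blast
  have "2 \<le> vec.dim (B \<inter> S)"
    using W vec.dim_subset[of W "B \<inter> S"] by auto
  moreover have "vec.dim (B \<inter> S) \<le> Suc (vec.dim (L \<inter> S))"
    using dim_Int_le_Suc_dim_Int[OF L B(1) _ B(2,3)] G S by blast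
  moreover have "vec.dim (L \<inter> S) \<le> 1"
    using L_meets S by blast
  ultimately show "B \<in> (\<Union>S\<in>{S\<in>G. vec.dim (L \<inter> S) = 1}.
            {B. vec.subspace B \<and> L \<subseteq> B \<and> vec.dim B = Suc (vec.dim L)
                \<and> vec.dim (B \<inter> S) = Suc (vec.dim (L \<inter> S))})"
    using B S by auto
next
  fix B assume "B \<in> (\<Union>S\<in>{S\<in>G. vec.dim (L \<inter> S) = 1}.
            {B. vec.subspace B \<and> L \<subseteq> B \<and> vec.dim B = Suc (vec.dim L)
                \<and> vec.dim (B \<inter> S) = Suc (vec.dim (L \<inter> S))})"
  then obtain S where S: "S \<in> G" "vec.dim (L \<inter> S) = 1"
    and B: "vec.subspace B" "L \<subseteq> B" "vec.dim B = Suc (vec.dim L)" "vec.dim (B \<inter> S) = 2"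
    by auto
  have "\<not> scattered G B"
    unfolding scattered_def using S B G by (auto intro!: exI[of _ "B \<inter> S"] vec.subspace_inter)
  then show "B \<in> {B. vec.subspace B \<and> L \<subseteq> B \<and> vec.dim B = Suc (vec.dim L) \<and> \<not> scattered G B}"
    using B by blast
qed

text \<open>Disjointness of the union is where dim L \<le> 2 enters: a subspace of dimension
  dim L + 1 \<le> 3 cannot meet two distinct spread elements in lines.\<close>
lemma card_not_scattered_Suc_dim:
  fixes G :: "('a::{field,finite} ^ 'n) set set"
  assumes spread: "is_spread g G" and L: "vec.subspace L" and dim_L: "vec.dim L \<le> 2"
    and L_meets: "\<forall>S\<in>G. vec.dim (L \<inter> S) \<le> 1"
  shows "real (card {B. vec.subspace B \<and> L \<subseteq> B \<and> vec.dim B = Suc (vec.dim L)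
                         \<and> \<not> scattered G B})
         = gauss_binom CARD('a) (vec.dim L) 1 * gauss_binom CARD('a) (g - 1) 1"
proof -
  define GL where "GL = {S\<in>G. vec.dim (L \<inter> S) = 1}"
  define E where "E S = {B. vec.subspace B \<and> L \<subseteq> B \<and> vec.dim B = Suc (vec.dim L)
                            \<and> vec.dim (B \<inter> S) = Suc (vec.dim (L \<inter> S))}" for S
  have G: "vec.subspace S" "vec.dim S = g" if "S \<in> G" for S
    using spread that unfolding is_spread_def by blast+
  have card_E: "real (card (E S)) = gauss_binom CARD('a) (g - 1) 1" if S: "S \<in> GL" for S
  proof -
    have "card (E S) = card {W. vec.subspace W \<and> L \<inter> S \<subseteq> W \<and> W \<subseteq> S
                                \<and> vec.dim W = Suc (vec.dim (L \<inter> S))}"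
      unfolding E_def using bij_betw_Int_subspaces_Suc_dim[OF L G(1)] S GL_def
      by (blast intro: bij_betw_same_card)
    then show ?thesis
      using card_subspaces_Suc_dim_between[of "L \<inter> S" S] L G S
      by (simp add: GL_def vec.subspace_inter)
  qed
  have disjoint: "E S \<inter> E S' = {}" if "S \<in> GL" "S' \<in> GL" "S \<noteq> S'" for S S'
    using dim_Int_spread_elements_le[OF spread] that dim_L by (fastforce simp: E_def GL_def)
  have "{B. vec.subspace B \<and> L \<subseteq> B \<and> vec.dim B = Suc (vec.dim L) \<and> \<not> scattered G B}
        = (\<Union>S\<in>GL. E S)"
    unfolding GL_def E_def using not_scattered_Suc_dim_eq_UN[OF _ L L_meets] G by blast
  then have "real (card {B. vec.subspace B \<and> L \<subseteq> B \<and> vec.dim B = Suc (vec.dim L) \<and> \<not> scattered G B})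
             = (\<Sum>S\<in>GL. real (card (E S)))"
    using disjoint by (simp add: card_UN_disjoint)
  also have "\<dots> = real (card GL) * gauss_binom CARD('a) (g - 1) 1"
    using card_E by simp
  also have "card GL = card {P. vec.subspace P \<and> vec.dim P = 1 \<and> P \<subseteq> L}"
    unfolding GL_def
    by (rule bij_betw_same_card[OF bij_betw_spread_elements_points[OF spread L L_meets]])
  finally show ?thesis
    using card_points[OF L] by simp
qed

theorem lemma3:
  fixes G :: "('a::{field,finite} ^ 'n) set set"
    and L :: "('a ^ 'n) set"
    and g :: nat
  assumes spread: "is_spread g G"
    and L_sub: "vec.subspace L" and L_dim: "vec.dim L = 2"
    and L_not: "\<forall>S\<in>G. \<not> L \<subseteq> S"
  shows "real (card {B. vec.subspace B \<and> vec.dim B = 3 \<and> L \<subseteq> B \<and> scattered G B}) =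
           gauss_binom CARD('a) (CARD('n) - 2) 1
           - gauss_binom CARD('a) 2 1 * gauss_binom CARD('a) (g - 1) 1"
proof -
  have L_meets: "\<forall>S\<in>G. vec.dim (L \<inter> S) \<le> 1"
    using dim_Int_less_if_not_subset[OF L_sub] L_not L_dim spread
    unfolding is_spread_def by fastforce
  define T where "T = {B. vec.subspace B \<and> L \<subseteq> B \<and> vec.dim B = Suc (vec.dim L)}"
  define N where "N = {B. vec.subspace B \<and> L \<subseteq> B \<and> vec.dim B = Suc (vec.dim L) \<and> \<not> scattered G B}"
  have "{B. vec.subspace B \<and> vec.dim B = 3 \<and> L \<subseteq> B \<and> scattered G B} = T - N"
    using L_dim by (auto simp: T_def N_def)
  moreover have "N \<subseteq> T"
    by (auto simp: T_def N_def)
  moreover have "real (card T) = gauss_binom CARD('a) (CARD('n) - 2) 1"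
    using card_subspaces_Suc_dim_between[OF L_sub vec.subspace_UNIV] L_dim
    by (simp add: T_def card_cart_basis)
  moreover have "real (card N) = gauss_binom CARD('a) 2 1 * gauss_binom CARD('a) (g - 1) 1"
    using card_not_scattered_Suc_dim[OF spread L_sub _ L_meets] L_dim by (simp add: N_def)
  ultimately show ?thesis
    by (simp add: card_Diff_subset card_mono)
qed

end
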